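(* Let $C=\mathbb{S}^1\times\mathbb{R}$ be the flat Euclidean cylinder and $f:C\to C$ a geodesic-preserving bijection. Then $f$ maps horizontal geodesics to horizontal geodesics.
   Context: $C$ carries the product of the flat metric on $\mathbb{S}^1=\mathbb{R}/\mathbb{Z}$ and the standard metric on $\mathbb{R}$. A geodesic is the image of a locally isometric immersion of the whole real line; a bijection (not assumed continuous) is geodesic-preserving if it maps every geodesic onto a geodesic as a set. Horizontal geodesics are the circles $\mathbb{S}^1\times\{r\}$. *)

theory Defs
  imports "HOL-Analysis.Analysis"
begin

text \<open>The flat cylinder C = S^1 x R with S^1 = R/Z, modelled by the fundamental
domain [0,1) x R; the point (x,y) stands for the class of x in R/Z and height y.\<close>

definition cyl :: "(real \<times> real) set" where
  "cyl = {0..<1} \<times> UNIV"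

definition circ_dist :: "real \<Rightarrow> real \<Rightarrow> real" where
  "circ_dist a b = \<bar>(a - b) - of_int (round (a - b))\<bar>"

definition cyl_dist :: "real \<times> real \<Rightarrow> real \<times> real \<Rightarrow> real" where
  "cyl_dist p q = sqrt ((circ_dist (fst p) (fst q))\<^sup>2 + (snd p - snd q)\<^sup>2)"

definition local_isometry :: "(real \<Rightarrow> real \<times> real) \<Rightarrow> bool" where
  "local_isometry \<gamma> \<longleftrightarrow> range \<gamma> \<subseteq> cyl \<and>
     (\<forall>t. \<exists>e>0. \<forall>s\<in>{t-e<..<t+e}. \<forall>s'\<in>{t-e<..<t+e}.
         cyl_dist (\<gamma> s) (\<gamma> s') = \<bar>s - s'\<bar>)"

definition geodesic :: "(real \<times> real) set \<Rightarrow> bool" where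
  "geodesic G \<longleftrightarrow> (\<exists>\<gamma>. local_isometry \<gamma> \<and> G = range \<gamma>)"

definition horizontal :: "real \<Rightarrow> (real \<times> real) set" where
  "horizontal r = {0..<1} \<times> {r}"

definition geodesic_preserving :: "(real \<times> real \<Rightarrow> real \<times> real) \<Rightarrow> bool" where
  "geodesic_preserving f \<longleftrightarrow> (\<forall>G. geodesic G \<longrightarrow> geodesic (f ` G))"

end

theory Submission
  imports Defs
begin

(* Every geodesic of C is the image of a unit-speed straight line, hence either a horizontal
   circle or a graph x = c + m y (mod 1) over the height axis.  Two such graphs that meet once
   meet at least twice, whereas a horizontal circle meets every other geodesic at most once.
   The vertical line V through (0, r) and the helix D = {x = y mod 1} are distinct and meet
   twice, so f(V) cannot be horizontal.  If f(H), for H = S^1 x {r}, were not horizontal either,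
   then f(H) and f(V) would meet twice, although H and V meet only in (0, r) and f is
   injective. *)

lemma isometry_on_interval_affine:
  fixes P :: "real \<Rightarrow> 'a::real_inner"
  assumes iso: "\<And>s s'. s \<in> {a..b} \<Longrightarrow> s' \<in> {a..b} \<Longrightarrow> dist (P s) (P s') = \<bar>s - s'\<bar>"
    and "a < b"
  shows "\<exists>w. norm w = 1 \<and> (\<forall>s\<in>{a..b}. P s = P a + (s - a) *\<^sub>R w)"
proof (intro exI conjI ballI)
  define w where "w = (1 / (b - a)) *\<^sub>R (P b - P a)"
  have ab: "a \<in> {a..b}" "b \<in> {a..b}" using \<open>a < b\<close> by auto
  show "norm w = 1" using iso[OF ab] \<open>a < b\<close> by (simp add: w_def dist_norm norm_minus_commute)
  fix s assume s: "s \<in> {a..b}"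
  have "dist (P a) (P b) = dist (P a) (P s) + dist (P s) (P b)"
    using iso[OF ab(1) ab(2)] iso[OF ab(1) s] iso[OF s ab(2)] s by auto
  then have "(s - a) *\<^sub>R (P s - P b) = (b - s) *\<^sub>R (P a - P s)"
    unfolding dist_triangle_eq using iso[OF ab(1) s] iso[OF s ab(2)] s by (simp add: dist_norm)
  then have "(b - a) *\<^sub>R P s = (b - a) *\<^sub>R P a + (s - a) *\<^sub>R (P b - P a)"
    by (simp add: algebra_simps)
  also have "\<dots> = (b - a) *\<^sub>R (P a + (s - a) *\<^sub>R w)"
    using \<open>a < b\<close> by (simp add: w_def scaleR_add_right)
  finally show "P s = P a + (s - a) *\<^sub>R w" using \<open>a < b\<close> by simp
qed

lemma connected_eq_if_locally_in_family:
  fixes \<gamma> :: "'a::topological_space \<Rightarrow> 'b"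
  assumes "connected (UNIV :: 'a set)"
    and locally: "\<And>t. \<exists>k\<in>K. eventually (\<lambda>s. \<gamma> s = k s) (nhds t)"
    and unique: "\<And>k k' t. k \<in> K \<Longrightarrow> k' \<in> K \<Longrightarrow> eventually (\<lambda>s. k s = k' s) (nhds t) \<Longrightarrow> k = k'"
  shows "\<exists>k\<in>K. \<gamma> = k"
proof -
  define \<kappa> where "\<kappa> t = (SOME k. k \<in> K \<and> eventually (\<lambda>s. \<gamma> s = k s) (nhds t))" for t
  have \<kappa>: "\<kappa> t \<in> K" "eventually (\<lambda>s. \<gamma> s = \<kappa> t s) (nhds t)" for t
    using someI_ex[OF locally[of t, unfolded Bex_def]] by (simp_all add: \<kappa>_def)
  have "eventually (\<lambda>t'. \<kappa> t = \<kappa> t') (at t within UNIV)" for t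
  proof -
    have "eventually (\<lambda>t'. eventually (\<lambda>s. \<gamma> s = \<kappa> t s) (nhds t')) (nhds t)"
      using \<kappa>(2) by (simp add: eventually_eventually)
    then have "eventually (\<lambda>t'. \<kappa> t = \<kappa> t') (nhds t)"
    proof (rule eventually_mono)
      fix t' assume "eventually (\<lambda>s. \<gamma> s = \<kappa> t s) (nhds t')"
      with \<kappa>(2)[of t'] have "eventually (\<lambda>s. \<kappa> t s = \<kappa> t' s) (nhds t')"
        by (auto elim: eventually_elim2)
      then show "\<kappa> t = \<kappa> t'" using unique \<kappa>(1) by blast
    qed
    then show ?thesis by (simp add: eventually_at_filter eventually_mono)
  qed
  then have "\<kappa> t = \<kappa> t'" for t t' using connected_local_const[OF assms(1)] by blast
  then have "\<gamma> = \<kappa> t" for t using eventually_nhds_x_imp_x[OF \<kappa>(2)] by (auto simp: fun_eq_iff)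
  then show ?thesis using \<kappa>(1) by blast
qed

lemma affine_Ints_valued_imp_const:
  fixes p k :: real
  assumes "d > 0" and Ints: "\<And>s. \<bar>s - c\<bar> < d \<Longrightarrow> p + s * k \<in> \<int>"
  shows "k = 0"
proof (rule ccontr)
  assume "k \<noteq> 0"
  define \<delta> where "\<delta> = min (d/2) (1 / (2 * \<bar>k\<bar>))"
  have "\<delta> > 0" "\<delta> < d" using \<open>d > 0\<close> \<open>k \<noteq> 0\<close> by (auto simp: \<delta>_def)
  then have "(p + (c + \<delta>) * k) - (p + c * k) \<in> \<int>" using Ints \<open>d > 0\<close> by (intro Ints_diff) auto
  then have "1 \<le> \<bar>\<delta> * k\<bar>"
    using \<open>\<delta> > 0\<close> \<open>k \<noteq> 0\<close> by (intro Ints_nonzero_abs_ge1) (auto simp: algebra_simps)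
  moreover have "\<bar>\<delta> * k\<bar> \<le> 1/2"
  proof -
    have "\<bar>\<delta> * k\<bar> \<le> 1 / (2 * \<bar>k\<bar>) * \<bar>k\<bar>"
      unfolding abs_mult using \<open>\<delta> > 0\<close> by (intro mult_right_mono) (auto simp: \<delta>_def)
    then show ?thesis using \<open>k \<noteq> 0\<close> by simp
  qed
  ultimately show False by simp
qed

lemma frac_eq_frac_iff: "frac x = frac y \<longleftrightarrow> x - y \<in> \<int>"
  using frac_diff_eq frac_diff_zero frac_eq_0_iff by metis

lemma circ_dist_eq_abs:
  assumes "x - y - d \<in> \<int>" and "\<bar>d\<bar> < 1/2"
  shows "circ_dist x y = \<bar>d\<bar>"
proof -
  obtain n where n: "x - y = of_int n + d" using assms(1) by (metis Ints_cases add.commute diff_eq_eq)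
  have "round (x - y) = n" using assms(2) by (intro round_unique') (simp add: n)
  then show ?thesis by (simp add: circ_dist_def n)
qed

lemma circ_dist_le_cyl_dist: "circ_dist (fst p) (fst q) \<le> cyl_dist p q"
  unfolding cyl_dist_def by (rule real_le_rsqrt) simp

definition cyl_line :: "real \<Rightarrow> real \<Rightarrow> real \<Rightarrow> real \<Rightarrow> real \<Rightarrow> real \<times> real" where
  "cyl_line \<alpha> \<beta> a b s = (frac (\<alpha> + s * a), \<beta> + s * b)"

lemma local_isometry_cyl_line:
  assumes "a\<^sup>2 + b\<^sup>2 = 1"
  shows "local_isometry (cyl_line \<alpha> \<beta> a b)"
  unfolding local_isometry_def
proof (intro conjI allI)
  show "range (cyl_line \<alpha> \<beta> a b) \<subseteq> cyl" by (auto simp: cyl_line_def cyl_def frac_lt_1)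
  have "a\<^sup>2 \<le> 1" using assms zero_le_power2[of b] by linarith
  then have "\<bar>a\<bar> \<le> 1" by (simp add: abs_square_le_1)
  fix t
  show "\<exists>e>0. \<forall>s\<in>{t-e<..<t+e}. \<forall>s'\<in>{t-e<..<t+e}.
          cyl_dist (cyl_line \<alpha> \<beta> a b s) (cyl_line \<alpha> \<beta> a b s') = \<bar>s - s'\<bar>"
  proof (intro exI[of _ "1/4"] conjI ballI)
    fix s s' assume "s \<in> {t - 1/4<..<t + 1/4}" "s' \<in> {t - 1/4<..<t + 1/4}"
    then have "\<bar>s - s'\<bar> < 1/2" unfolding abs_less_iff by simp
    moreover have "\<bar>(s - s') * a\<bar> \<le> \<bar>s - s'\<bar>"
      using \<open>\<bar>a\<bar> \<le> 1\<close> by (simp add: abs_mult mult_left_le)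
    moreover have "frac (\<alpha> + s * a) - frac (\<alpha> + s' * a) - (s - s') * a \<in> \<int>"
      by (simp add: frac_def algebra_simps)
    ultimately have "circ_dist (frac (\<alpha> + s * a)) (frac (\<alpha> + s' * a)) = \<bar>(s - s') * a\<bar>"
      by (intro circ_dist_eq_abs) auto
    moreover have "((s - s') * a)\<^sup>2 + ((s - s') * b)\<^sup>2 = (s - s')\<^sup>2"
      using assms by (simp add: power_mult_distrib flip: distrib_left)
    ultimately show "cyl_dist (cyl_line \<alpha> \<beta> a b s) (cyl_line \<alpha> \<beta> a b s') = \<bar>s - s'\<bar>"
      by (simp add: cyl_dist_def cyl_line_def algebra_simps)
  qed simp
qed

lemma local_isometry_locally_lifts:
  assumes "local_isometry \<gamma>"
  obtains e U where "e > 0" and "\<forall>s. U s - fst (\<gamma> s) \<in> \<int>"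
    and "\<forall>s\<in>{t-e..t+e}. \<forall>s'\<in>{t-e..t+e}. dist (U s, snd (\<gamma> s)) (U s', snd (\<gamma> s')) = \<bar>s - s'\<bar>"
proof -
  obtain e0 where "e0 > 0" and iso0: "\<forall>s\<in>{t-e0<..<t+e0}. \<forall>s'\<in>{t-e0<..<t+e0}.
      cyl_dist (\<gamma> s) (\<gamma> s') = \<bar>s - s'\<bar>"
    using assms unfolding local_isometry_def by blast
  define e where "e = min e0 (1/4) / 2"
  have "{t-e..t+e} \<subseteq> {t-e0<..<t+e0}" using \<open>e0 > 0\<close> by (auto simp: e_def)
  then have iso: "cyl_dist (\<gamma> s) (\<gamma> s') = \<bar>s - s'\<bar>" if "s \<in> {t-e..t+e}" "s' \<in> {t-e..t+e}" for s s'
    using that iso0 by blast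
  have near: "\<bar>s - t\<bar> \<le> 1/8" if "s \<in> {t-e..t+e}" for s
    using that unfolding e_def atLeastAtMost_iff abs_le_iff by linarith
  define u where "u s = fst (\<gamma> s)" for s
  define U where "U s = u s - of_int (round (u s - u t))" for s
  have U_near: "\<bar>U s - u t\<bar> \<le> 1/8" if "s \<in> {t-e..t+e}" for s
  proof -
    have "\<bar>U s - u t\<bar> = circ_dist (u s) (u t)" by (simp add: U_def circ_dist_def algebra_simps)
    also have "\<dots> \<le> \<bar>s - t\<bar>"
      using circ_dist_le_cyl_dist[of "\<gamma> s" "\<gamma> t"] iso[OF that, of t] that by (simp add: u_def)
    finally show ?thesis using near[OF that] by linarith
  qed
  show ?thesis
  proof (rule that)
    show "e > 0" using \<open>e0 > 0\<close> by (simp add: e_def)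
    show "\<forall>s. U s - fst (\<gamma> s) \<in> \<int>" by (simp add: U_def u_def)
    show "\<forall>s\<in>{t-e..t+e}. \<forall>s'\<in>{t-e..t+e}. dist (U s, snd (\<gamma> s)) (U s', snd (\<gamma> s')) = \<bar>s - s'\<bar>"
    proof (intro ballI)
      fix s s' assume s: "s \<in> {t-e..t+e}" and s': "s' \<in> {t-e..t+e}"
      have "circ_dist (u s) (u s') = \<bar>U s - U s'\<bar>"
      proof (rule circ_dist_eq_abs)
        show "u s - u s' - (U s - U s') \<in> \<int>" by (simp add: U_def)
        show "\<bar>U s - U s'\<bar> < 1/2"
          using U_near[OF s] U_near[OF s'] unfolding abs_le_iff abs_less_iff by linarith
      qed
      then show "dist (U s, snd (\<gamma> s)) (U s', snd (\<gamma> s')) = \<bar>s - s'\<bar>"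
        using iso[OF s s'] by (simp add: dist_Pair_Pair dist_real_def cyl_dist_def u_def)
    qed
  qed
qed

lemma local_isometry_locally_cyl_line:
  assumes "local_isometry \<gamma>"
  obtains \<alpha> \<beta> a b where "a\<^sup>2 + b\<^sup>2 = 1"
    and "eventually (\<lambda>s. \<gamma> s = cyl_line \<alpha> \<beta> a b s) (nhds t)"
proof -
  obtain e U where "e > 0" and U_lift: "\<forall>s. U s - fst (\<gamma> s) \<in> \<int>"
    and dist_lift: "\<forall>s\<in>{t-e..t+e}. \<forall>s'\<in>{t-e..t+e}.
      dist (U s, snd (\<gamma> s)) (U s', snd (\<gamma> s')) = \<bar>s - s'\<bar>"
    by (rule local_isometry_locally_lifts[OF assms, where t = t])
  define v where "v s = snd (\<gamma> s)" for s
  have "\<exists>w. norm w = 1 \<and>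
      (\<forall>s\<in>{t-e..t+e}. (U s, v s) = (U (t-e), v (t-e)) + (s - (t-e)) *\<^sub>R w)"
    using \<open>e > 0\<close> dist_lift unfolding v_def by (intro isometry_on_interval_affine) auto
  then obtain w where w: "norm w = 1"
    and aff: "\<And>s. s \<in> {t-e..t+e} \<Longrightarrow> (U s, v s) = (U (t-e), v (t-e)) + (s - (t-e)) *\<^sub>R w"
    by blast
  have "\<gamma> s \<in> cyl" for s using assms by (auto simp: local_isometry_def)
  then have "frac (U s) = fst (\<gamma> s)" for s
    using U_lift by (simp add: frac_unique_iff cyl_def mem_Times_iff)
  then have \<gamma>_via_lift: "\<gamma> s = (frac (U s), v s)" for s by (simp add: v_def)
  define \<alpha> where "\<alpha> = U (t-e) - (t-e) * fst w"
  define \<beta> where "\<beta> = v (t-e) - (t-e) * snd w"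
  have "\<gamma> s = cyl_line \<alpha> \<beta> (fst w) (snd w) s" if "s \<in> {t-e..t+e}" for s
  proof -
    have "U s = \<alpha> + s * fst w" "v s = \<beta> + s * snd w"
      using aff[OF that] by (simp_all add: \<alpha>_def \<beta>_def prod_eq_iff algebra_simps)
    then show ?thesis by (simp add: \<gamma>_via_lift cyl_line_def)
  qed
  moreover have "eventually (\<lambda>s. s \<in> {t-e<..<t+e}) (nhds t)"
    using \<open>e > 0\<close> by (intro eventually_nhds_in_open) auto
  ultimately have "eventually (\<lambda>s. \<gamma> s = cyl_line \<alpha> \<beta> (fst w) (snd w) s) (nhds t)"
    by (auto elim!: eventually_mono)
  moreover have "(fst w)\<^sup>2 + (snd w)\<^sup>2 = 1"
    using w by (metis norm_Pair prod.collapse real_norm_def real_sqrt_eq_1_iff power2_abs)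
  ultimately show ?thesis using that by blast
qed

lemma cyl_line_eq_if_eventually_eq:
  assumes "eventually (\<lambda>s. cyl_line \<alpha> \<beta> a b s = cyl_line \<alpha>' \<beta>' a' b' s) (nhds c)"
  shows "cyl_line \<alpha> \<beta> a b = cyl_line \<alpha>' \<beta>' a' b'"
proof -
  obtain d where "d > 0" and eq: "\<And>s. \<bar>s - c\<bar> < d \<Longrightarrow> cyl_line \<alpha> \<beta> a b s = cyl_line \<alpha>' \<beta>' a' b' s"
    using assms unfolding eventually_nhds_metric dist_real_def by blast
  have "(\<beta> - \<beta>') + s * (b - b') \<in> \<int>" if "\<bar>s - c\<bar> < d" for s
    using eq[OF that] by (simp add: cyl_line_def algebra_simps)
  then have "b = b'" using affine_Ints_valued_imp_const[OF \<open>d > 0\<close>] by force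
  moreover have "\<beta> = \<beta>'" using eq[of c] \<open>d > 0\<close> \<open>b = b'\<close> by (simp add: cyl_line_def)
  moreover have Ints: "(\<alpha> - \<alpha>') + s * (a - a') \<in> \<int>" if "\<bar>s - c\<bar> < d" for s
  proof -
    have "frac (\<alpha> + s * a) = frac (\<alpha>' + s * a')" using eq[OF that] by (simp add: cyl_line_def)
    then have "(\<alpha> + s * a) - (\<alpha>' + s * a') \<in> \<int>" by (simp add: frac_eq_frac_iff)
    then show ?thesis by (simp add: algebra_simps)
  qed
  then have "a = a'" using affine_Ints_valued_imp_const[OF \<open>d > 0\<close>] by force
  moreover have "\<alpha> - \<alpha>' \<in> \<int>" using Ints[of c] \<open>d > 0\<close> \<open>a = a'\<close> by simp
  then have "frac (\<alpha> + s * a) = frac (\<alpha>' + s * a)" for s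
    using frac_add_int_right[of "\<alpha> - \<alpha>'" "\<alpha>' + s * a"] by (simp add: algebra_simps)
  ultimately show ?thesis by (simp add: cyl_line_def fun_eq_iff)
qed

lemma local_isometry_eq_cyl_line:
  assumes "local_isometry \<gamma>"
  obtains \<alpha> \<beta> a b where "a\<^sup>2 + b\<^sup>2 = 1" "\<gamma> = cyl_line \<alpha> \<beta> a b"
proof -
  let ?K = "{cyl_line \<alpha> \<beta> a b | \<alpha> \<beta> a b. a\<^sup>2 + b\<^sup>2 = 1}"
  have "\<exists>k\<in>?K. \<gamma> = k"
  proof (rule connected_eq_if_locally_in_family)
    show "\<exists>k\<in>?K. eventually (\<lambda>s. \<gamma> s = k s) (nhds t)" for t
    proof -
      obtain \<alpha> \<beta> a b where "a\<^sup>2 + b\<^sup>2 = 1" "eventually (\<lambda>s. \<gamma> s = cyl_line \<alpha> \<beta> a b s) (nhds t)"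
        by (rule local_isometry_locally_cyl_line[OF assms])
      then show ?thesis by blast
    qed
    show "k = k'" if "k \<in> ?K" "k' \<in> ?K" "eventually (\<lambda>s. k s = k' s) (nhds t)" for k k' t
      using that by (auto intro: cyl_line_eq_if_eventually_eq)
  qed simp
  then show ?thesis using that by blast
qed

(* The non-horizontal geodesics, as graphs over the height axis; m = 0 gives the vertical lines. *)
definition slanted :: "real \<Rightarrow> real \<Rightarrow> (real \<times> real) set" where
  "slanted c m = range (\<lambda>y. (frac (c + m * y), y))"

lemma range_cyl_line_horizontal:
  assumes "a\<^sup>2 = 1"
  shows "range (cyl_line \<alpha> \<beta> a 0) = horizontal \<beta>"
proof
  show "range (cyl_line \<alpha> \<beta> a 0) \<subseteq> horizontal \<beta>"
    by (auto simp: cyl_line_def horizontal_def frac_lt_1)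
  show "horizontal \<beta> \<subseteq> range (cyl_line \<alpha> \<beta> a 0)"
  proof
    fix p assume "p \<in> horizontal \<beta>"
    then obtain x where "x \<in> {0..<1}" "p = (x, \<beta>)" by (auto simp: horizontal_def)
    moreover have "a \<noteq> 0" using assms by auto
    ultimately have "cyl_line \<alpha> \<beta> a 0 ((x - \<alpha>) / a) = p" by (simp add: cyl_line_def)
    then show "p \<in> range (cyl_line \<alpha> \<beta> a 0)" by (metis rangeI)
  qed
qed

lemma range_cyl_line_slanted:
  assumes "b \<noteq> 0"
  shows "range (cyl_line \<alpha> \<beta> a b) = slanted (\<alpha> - a * \<beta> / b) (a / b)"
proof -
  have eq: "\<alpha> - a * \<beta> / b + a / b * (\<beta> + s * b) = \<alpha> + s * a" for s
    using assms by (simp add: field_simps)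
  have "cyl_line \<alpha> \<beta> a b = (\<lambda>y. (frac (\<alpha> - a * \<beta> / b + a / b * y), y)) \<circ> (\<lambda>s. \<beta> + s * b)"
    unfolding fun_eq_iff comp_def cyl_line_def eq by simp
  moreover have "surj (\<lambda>s. \<beta> + s * b)"
    by (rule surjI[of _ "\<lambda>y. (y - \<beta>) / b"]) (simp add: assms)
  ultimately show ?thesis unfolding slanted_def by (simp only: image_comp[symmetric])
qed

lemma geodesic_iff: "geodesic G \<longleftrightarrow> (\<exists>r. G = horizontal r) \<or> (\<exists>c m. G = slanted c m)"
proof
  assume "geodesic G"
  then obtain \<gamma> where "local_isometry \<gamma>" "G = range \<gamma>" by (auto simp: geodesic_def)
  then obtain \<alpha> \<beta> a b where "a\<^sup>2 + b\<^sup>2 = 1" "G = range (cyl_line \<alpha> \<beta> a b)"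
    by (metis local_isometry_eq_cyl_line)
  then show "(\<exists>r. G = horizontal r) \<or> (\<exists>c m. G = slanted c m)"
    using range_cyl_line_horizontal range_cyl_line_slanted by (cases "b = 0") auto
next
  have "geodesic (horizontal r)" for r
    using local_isometry_cyl_line[of 1 0 0 r] range_cyl_line_horizontal[of 1 0 r]
    by (auto simp: geodesic_def)
  moreover have "geodesic (slanted c m)" for c m
  proof -
    define b where "b = 1 / sqrt (1 + m\<^sup>2)"
    have "1 + m\<^sup>2 > 0" using zero_le_power2[of m] by linarith
    then have "b \<noteq> 0" and unit: "(m * b)\<^sup>2 + b\<^sup>2 = 1"
      by (simp_all add: b_def power_mult_distrib power_divide field_simps)
    from unit have "local_isometry (cyl_line c 0 (m * b) b)" by (rule local_isometry_cyl_line)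
    moreover have "range (cyl_line c 0 (m * b) b) = slanted c m"
      using range_cyl_line_slanted[OF \<open>b \<noteq> 0\<close>, of c 0 "m * b"] \<open>b \<noteq> 0\<close> by simp
    ultimately show ?thesis unfolding geodesic_def by metis
  qed
  ultimately show "(\<exists>r. G = horizontal r) \<or> (\<exists>c m. G = slanted c m) \<Longrightarrow> geodesic G" by auto
qed

lemma slanted_Int_slanted_ne_singleton: "slanted c m \<inter> slanted c' m' \<noteq> {p}"
proof
  assume single: "slanted c m \<inter> slanted c' m' = {p}"
  then have "p \<in> slanted c m" "p \<in> slanted c' m'" by auto
  then obtain y where p: "p = (frac (c + m * y), y)" by (auto simp: slanted_def)
  with \<open>p \<in> slanted c' m'\<close> have "frac (c + m * y) = frac (c' + m' * y)" by (auto simp: slanted_def)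
  then have Ints: "(c + m * y) - (c' + m' * y) \<in> \<int>" by (simp add: frac_eq_frac_iff)
  define y' where "y' = (if m = m' then y + 1 else y + 1 / (m - m'))"
  have eq: "(c + m * y') - (c' + m' * y') = ((c + m * y) - (c' + m' * y)) + (if m = m' then 0 else 1)"
    by (simp add: y'_def field_simps)
  have "(c + m * y') - (c' + m' * y') \<in> \<int>" unfolding eq using Ints by (intro Ints_add) auto
  then have "(frac (c + m * y'), y') \<in> slanted c m \<inter> slanted c' m'"
    by (auto simp: slanted_def frac_eq_frac_iff)
  moreover have "y' \<noteq> y" by (simp add: y'_def)
  ultimately show False using single p by auto
qed

lemma horizontal_Int_geodesic_subsingleton:
  assumes "geodesic G" "G \<noteq> horizontal r" "p \<in> horizontal r \<inter> G" "q \<in> horizontal r \<inter> G"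
  shows "p = q"
  using assms(1) unfolding geodesic_iff
proof (elim disjE exE)
  fix r' assume "G = horizontal r'"
  with assms(2-4) show ?thesis by (auto simp: horizontal_def)
next
  fix c m assume "G = slanted c m"
  with assms(3,4) show ?thesis by (auto simp: horizontal_def slanted_def)
qed

lemma geodesic_subset_cyl: "geodesic G \<Longrightarrow> G \<subseteq> cyl"
  by (auto simp: geodesic_def local_isometry_def)

lemma geodesics_meeting_twice_slanted:
  assumes "geodesic G" "geodesic G'" "G \<noteq> G'" "p \<in> G \<inter> G'" "q \<in> G \<inter> G'" "p \<noteq> q"
  shows "\<exists>c m. G = slanted c m"
proof -
  have "G \<noteq> horizontal r" for r
    using horizontal_Int_geodesic_subsingleton[OF assms(2)] assms(3-6) by blast
  then show ?thesis using assms(1) unfolding geodesic_iff by blast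
qed

theorem lemma4p2:
  fixes f :: "real \<times> real \<Rightarrow> real \<times> real"
  assumes "bij_betw f cyl cyl"
    and "geodesic_preserving f"
  shows "\<forall>r. \<exists>r'. f ` horizontal r = horizontal r'"
proof
  fix r
  have inj: "inj_on f cyl" using assms(1) by (rule bij_betw_imp_inj_on)
  have geodesic_f: "geodesic (f ` G)" if "geodesic G" for G
    using assms(2) that by (simp add: geodesic_preserving_def)
  define H where "H = horizontal r"
  define V where "V = slanted 0 0"
  define D where "D = slanted 0 1"
  have geo: "geodesic H" "geodesic V" "geodesic D" by (auto simp: geodesic_iff H_def V_def D_def)
  then have sub: "H \<subseteq> cyl" "V \<subseteq> cyl" "D \<subseteq> cyl" by (simp_all add: geodesic_subset_cyl)
  have "(1/2, 1/2) \<in> D" unfolding D_def slanted_def by (rule image_eqI[of _ _ "1/2"]) (simp_all add: frac_eq)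
  moreover have "(1/2, 1/2) \<notin> V" by (simp add: V_def slanted_def image_iff)
  ultimately have "f ` V \<noteq> f ` D" using inj sub by (auto simp: inj_on_image_eq_iff)
  moreover have VD: "(0, 0) \<in> V \<inter> D" "(0, 1) \<in> V \<inter> D"
    by (auto simp: V_def D_def slanted_def image_iff intro: exI[of _ 0] exI[of _ 1])
  moreover have "f (0, 0) \<noteq> f (0, 1)" using inj by (rule inj_on_contraD) (simp_all add: cyl_def)
  ultimately obtain c m where fV: "f ` V = slanted c m"
    using geodesics_meeting_twice_slanted[OF geodesic_f[OF geo(2)] geodesic_f[OF geo(3)]] by blast
  show "\<exists>r'. f ` horizontal r = horizontal r'"
  proof (rule ccontr)
    assume "\<nexists>r'. f ` horizontal r = horizontal r'"
    moreover have "(\<exists>r'. f ` H = horizontal r') \<or> (\<exists>c m. f ` H = slanted c m)"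
      using geodesic_f[OF geo(1)] by (simp only: geodesic_iff)
    ultimately obtain c' m' where "f ` H = slanted c' m'" unfolding H_def by blast
    moreover have "H \<inter> V = {(0, r)}" by (auto simp: H_def V_def horizontal_def slanted_def)
    then have "f ` H \<inter> f ` V = {f (0, r)}" using inj sub by (simp flip: inj_on_image_Int)
    ultimately show False using fV slanted_Int_slanted_ne_singleton by metis
  qed
qed

end
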